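(* For $n>4$ let $P_{2n}(x)=x^{2n}+x^{n+4}+x^{n+2}+x^n+x^{n-2}+x^{n-4}+1$. Then $$\lim_{n\to\infty}C(P_{2n})=\frac{2}{\pi}\arccos\!\left(\sqrt{\frac38+\frac{\sqrt{13}}{8}}\right)\approx 0.2741871146.$$
   Context: For a polynomial $P$ of degree $d$, let $I(P)$ and $E(P)$ denote the numbers of complex zeros of $P$ (counted with multiplicity) of modulus $<1$ and $>1$ respectively, and $C(P)=\frac{I(P)+E(P)}{d}$. *)

theory Defs
  imports "HOL-Analysis.Analysis" "HOL-Computational_Algebra.Polynomial"
begin

definition zeros_inside :: "complex poly \<Rightarrow> nat" where
  "zeros_inside p = (\<Sum>z\<in>{z. poly p z = 0 \<and> cmod z < 1}. order z p)"

definition zeros_outside :: "complex poly \<Rightarrow> nat" where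
  "zeros_outside p = (\<Sum>z\<in>{z. poly p z = 0 \<and> cmod z > 1}. order z p)"

definition C_ratio :: "complex poly \<Rightarrow> real" where
  "C_ratio p = real (zeros_inside p + zeros_outside p) / real (degree p)"

definition P2n :: "nat \<Rightarrow> complex poly" where
  "P2n n = monom 1 (2*n) + monom 1 (n+4) + monom 1 (n+2) + monom 1 n
           + monom 1 (n-2) + monom 1 (n-4) + 1"

end

theory Submission
  imports Defs "HOL-Computational_Algebra.Fundamental_Theorem_Algebra"
begin

text \<open>For \<open>z \<noteq> 0\<close> we have \<open>P\<^sub>2\<^sub>n(z) = z\<^sup>n Q\<^sub>n((z + 1/z)/2)\<close> with \<open>Q\<^sub>n = 2 T\<^sub>n + F\<close>, where \<open>T\<^sub>n\<close> is the
  Chebyshev polynomial and \<open>F(x) = 16x\<^sup>4 - 12x\<^sup>2 + 1\<close>. So every root \<open>x\<close> of \<open>Q\<^sub>n\<close> yields the two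
  roots of \<open>z\<^sup>2 - 2xz + 1\<close>, which lie on the unit circle iff \<open>x \<in> [-1, 1]\<close>, and
  \<open>C(P\<^sub>2\<^sub>n) = 1 - N\<^sub>n/n\<close> with \<open>N\<^sub>n\<close> the number of roots of \<open>Q\<^sub>n\<close> in \<open>[-1, 1]\<close>.

  Substituting \<open>x = cos t\<close> gives \<open>Q\<^sub>n(cos t) = 2 cos (n t) + F(cos t)\<close>, and \<open>F(cos t) < 2\<close> exactly for
  \<open>\<alpha> < t < \<pi> - \<alpha>\<close>, where \<open>cos\<^sup>2 \<alpha> = (3 + \<surd>13)/8\<close>. Outside this range \<open>Q\<^sub>n(cos t) > 0\<close>; inside it
  the sign of \<open>Q\<^sub>n\<close> alternates at the points \<open>cos (j\<pi>/n)\<close>, giving about \<open>n (1 - 2\<alpha>/\<pi>)\<close> roots.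
  Conversely, Rolle's theorem applied to the derivatives of \<open>Q\<^sub>n(cos t)\<close> shows that a window
  \<open>[j\<pi>/n, (j+1)\<pi>/n]\<close> contains at most one root when \<open>F\<close> stays below \<open>2\<close> on it, and at most five
  otherwise; for every \<open>\<beta> > \<alpha>\<close> only \<open>O(n (\<beta> - \<alpha>) + 1)\<close> windows of the second kind meet
  \<open>[\<alpha>, \<pi> - \<alpha>]\<close>. Hence \<open>N\<^sub>n/n \<rightarrow> 1 - 2\<alpha>/\<pi>\<close> and \<open>C(P\<^sub>2\<^sub>n) \<rightarrow> 2\<alpha>/\<pi>\<close>.\<close>

section \<open>Chebyshev polynomials\<close>

fun cheb_poly :: "nat \<Rightarrow> 'a::comm_ring_1 poly" where
  "cheb_poly 0 = 1"
| "cheb_poly (Suc 0) = [:0, 1:]"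
| "cheb_poly (Suc (Suc n)) = pCons 0 (smult 2 (cheb_poly (Suc n))) - cheb_poly n"

lemma poly_cheb_poly_cos: "poly (cheb_poly n) (cos t) = cos (real n * t)"
proof (induction n rule: cheb_poly.induct)
  case (3 n)
  have "poly (cheb_poly (Suc (Suc n))) (cos t)
        = 2 * cos t * cos (real (Suc n) * t) - cos (real (Suc n) * t - t)"
    using 3 by (simp add: algebra_simps)
  also have "\<dots> = cos (real (Suc n) * t + t)"
    by (simp add: cos_add cos_diff)
  finally show ?case
    by (simp add: algebra_simps)
qed simp_all

lemma cheb_poly_joukowski:
  fixes z :: "'a::field_char_0"
  assumes "z \<noteq> 0"
  shows "2 * poly (cheb_poly n) ((z + inverse z) / 2) = z ^ n + inverse z ^ n"
proof (induction n rule: cheb_poly.induct)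
  case (3 n)
  let ?w = "(z + inverse z) / 2"
  have "2 * poly (cheb_poly (Suc (Suc n))) ?w
        = (z + inverse z) * (2 * poly (cheb_poly (Suc n)) ?w) - 2 * poly (cheb_poly n) ?w"
    by (simp add: algebra_simps)
  also have "\<dots> = (z + inverse z) * (z ^ Suc n + inverse z ^ Suc n) - (z ^ n + inverse z ^ n)"
    using 3 by simp
  also have "\<dots> = z ^ Suc (Suc n) + inverse z ^ Suc (Suc n)"
    using assms by (simp add: field_simps power_Suc)
  finally show ?case .
qed simp_all

lemma coeff_cheb_poly_eq_0: "n < k \<Longrightarrow> coeff (cheb_poly n) k = 0"
  by (induction n arbitrary: k rule: cheb_poly.induct)
     (auto simp: coeff_1 coeff_pCons split: nat.split)

lemma coeff_cheb_poly_Suc: "coeff (cheb_poly (Suc n)) (Suc n) = (2::'a::comm_ring_1) ^ n"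
proof (induction n rule: less_induct)
  case (less n)
  then show ?case
    by (cases n) (simp_all add: coeff_cheb_poly_eq_0)
qed

lemma map_poly_of_real_cheb_poly:
  "map_poly of_real (cheb_poly n) = (cheb_poly n :: 'a::{real_algebra_1,comm_ring_1} poly)"
  by (induction n rule: cheb_poly.induct)
     (auto simp: poly_eq_iff coeff_map_poly coeff_pCons split: nat.split)

lemma poly_pderiv_cheb_poly_cos:
  "poly (pderiv (cheb_poly n)) (cos t) * sin t = real n * sin (real n * t)"
proof -
  have "((\<lambda>t. cos (real n * t)) has_real_derivative poly (pderiv (cheb_poly n)) (cos t) * - sin t) (at t)"
    using DERIV_chain2[OF poly_DERIV DERIV_cos, of "cheb_poly n" t] by (simp add: poly_cheb_poly_cos)
  moreover have "((\<lambda>t. cos (real n * t)) has_real_derivative - sin (real n * t) * real n) (at t)"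
    by (auto intro!: derivative_eq_intros)
  ultimately have "poly (pderiv (cheb_poly n)) (cos t) * - sin t = - sin (real n * t) * real n"
    by (rule DERIV_unique)
  then show ?thesis
    by simp
qed

lemma poly_pderiv2_cheb_poly_cos:
  "poly (pderiv (pderiv (cheb_poly n))) (cos t) * (sin t)\<^sup>2
   = cos t * poly (pderiv (cheb_poly n)) (cos t) - (real n)\<^sup>2 * cos (real n * t)"
proof -
  have "((\<lambda>t. real n * sin (real n * t)) has_real_derivative
          poly (pderiv (pderiv (cheb_poly n))) (cos t) * - sin t * sin t
          + cos t * poly (pderiv (cheb_poly n)) (cos t)) (at t)"
    using DERIV_mult[OF DERIV_chain2[OF poly_DERIV DERIV_cos] DERIV_sin, of "pderiv (cheb_poly n)" t]
    by (simp add: poly_pderiv_cheb_poly_cos)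
  moreover have "((\<lambda>t. real n * sin (real n * t)) has_real_derivative real n * (cos (real n * t) * real n)) (at t)"
    by (auto intro!: derivative_eq_intros)
  ultimately have "poly (pderiv (pderiv (cheb_poly n))) (cos t) * - sin t * sin t
          + cos t * poly (pderiv (cheb_poly n)) (cos t) = real n * (cos (real n * t) * real n)"
    by (rule DERIV_unique)
  then show ?thesis
    by (simp add: power2_eq_square algebra_simps)
qed

lemma poly_map_poly_of_real:
  "poly (map_poly of_real p) (of_real x) = (of_real (poly p x) :: 'a::{real_algebra_1,comm_ring_1})"
  by (induction p) (auto simp: map_poly_pCons)

lemma order_map_poly_of_real:
  fixes p :: "real poly"
  assumes "p \<noteq> 0"
  shows "order (of_real x) (map_poly of_real p :: 'a::real_field poly) = order x p"
  using assms
proof (induction "degree p" arbitrary: p rule: less_induct)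
  case less
  show ?case
  proof (cases "poly p x = 0")
    case False
    then show ?thesis
      by (simp add: order_0I poly_map_poly_of_real)
  next
    case True
    have "pderiv p \<noteq> 0"
    proof
      assume "pderiv p = 0"
      then obtain c where "p = [:c:]"
        using pderiv_iszero by blast
      with True less.prems show False
        by simp
    qed
    then have "degree (pderiv p) < degree p"
      by (metis degree_pderiv diff_less pderiv_eq_0_iff zero_less_one neq0_conv)
    have nz: "map_poly of_real p \<noteq> (0 :: 'a poly)"
      using less.prems by (simp add: map_poly_eq_0_iff)
    have "order (of_real x) (map_poly of_real p :: 'a poly)
          = Suc (order (of_real x) (pderiv (map_poly of_real p :: 'a poly)))"
      by (rule order_pderiv[OF nz]) (simp add: poly_map_poly_of_real True)
    also have "pderiv (map_poly of_real p) = (map_poly of_real (pderiv p) :: 'a poly)"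
      by (simp add: poly_eq_iff coeff_map_poly coeff_pderiv)
    finally show ?thesis
      using less.hyps[OF \<open>degree (pderiv p) < degree p\<close> \<open>pderiv p \<noteq> 0\<close>] order_pderiv[OF less.prems True]
      by simp
  qed
qed

section \<open>Real roots in an interval, counted with multiplicity\<close>

definition roots_between :: "real poly \<Rightarrow> real \<Rightarrow> real \<Rightarrow> nat" where
  "roots_between p a b = (\<Sum>x\<in>{x. poly p x = 0 \<and> a \<le> x \<and> x \<le> b}. order x p)"

lemma finite_roots_between:
  fixes p :: "real poly"
  assumes "p \<noteq> 0"
  shows "finite {x. poly p x = 0 \<and> a \<le> x \<and> x \<le> b}"
  using poly_roots_finite[OF assms] by (rule rev_finite_subset) auto

lemma sum_order_le_roots_between:
  assumes "p \<noteq> 0" "finite T" "T \<subseteq> {a..b}"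
  shows "(\<Sum>x\<in>T. order x p) \<le> roots_between p a b"
proof -
  have "(\<Sum>x\<in>T. order x p) = (\<Sum>x\<in>T \<inter> {x. poly p x = 0}. order x p)"
    using assms(1,2) by (intro sum.mono_neutral_right) (auto simp: order_gt_0_iff)
  also have "\<dots> \<le> roots_between p a b"
    unfolding roots_between_def
    using assms by (intro sum_mono2 finite_roots_between) auto
  finally show ?thesis .
qed

lemma roots_between_eq_0:
  "(\<And>x. a \<le> x \<Longrightarrow> x \<le> b \<Longrightarrow> poly p x \<noteq> 0) \<Longrightarrow> roots_between p a b = 0"
  unfolding roots_between_def by (metis (mono_tags, lifting) empty_Collect_eq sum.empty)

lemma roots_between_subadditive:
  assumes "p \<noteq> 0" "a \<le> b" "b \<le> c"
  shows "roots_between p a c \<le> roots_between p a b + roots_between p b c"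
proof -
  let ?R = "\<lambda>a b. {x. poly p x = 0 \<and> a \<le> x \<and> x \<le> b}"
  have "?R a c = ?R a b \<union> ?R b c"
    using assms by auto
  then show ?thesis
    unfolding roots_between_def
    by (simp add: sum_Un_nat finite_roots_between[OF assms(1)])
qed

lemma roots_between_le_pderiv:
  assumes "p \<noteq> 0"
  shows "roots_between p a b \<le> roots_between (pderiv p) a b + 1"
proof (cases "pderiv p = 0")
  case True
  then obtain c where "p = [:c:]"
    using pderiv_iszero by blast
  then have "roots_between p a b = 0"
    using assms by (intro roots_between_eq_0) auto
  then show ?thesis
    by simp
next
  case nonconst: False
  define R where "R b = {x. poly p x = 0 \<and> a \<le> x \<and> x \<le> b}" for b
  have fin: "finite (R b)" for b
    unfolding R_def using finite_roots_between[OF assms] .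
  \<comment> \<open>Induction on the number of roots: a root of order \<open>m\<close> of \<open>p\<close> is one of order \<open>m - 1\<close>
    of \<open>pderiv p\<close>, and Rolle gives a further root of \<open>pderiv p\<close> between the two largest roots.\<close>
  have claim: "roots_between p a b \<le> roots_between (pderiv p) a b + 1" if "card (R b) = k" for k b
    using that
  proof (induction k arbitrary: b rule: less_induct)
    case (less k b)
    show ?case
    proof (cases "R b = {}")
      case True
      then show ?thesis
        by (simp add: roots_between_def R_def[symmetric])
    next
      case False
      define M where "M = Max (R b)"
      have M: "M \<in> R b" "\<And>x. x \<in> R b \<Longrightarrow> x \<le> M"
        using fin False by (simp_all add: M_def)
      have ordM: "order M p = Suc (order M (pderiv p))"
        using M(1) assms by (intro order_pderiv) (auto simp: R_def)
      show ?thesis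
      proof (cases "R b = {M}")
        case True
        have "roots_between p a b = Suc (order M (pderiv p))"
          using True ordM by (simp add: roots_between_def R_def[symmetric])
        also have "order M (pderiv p) \<le> roots_between (pderiv p) a b"
          using sum_order_le_roots_between[OF nonconst, of "{M}" a b] M(1) by (simp add: R_def)
        finally show ?thesis
          by simp
      next
        case other: False
        define M' where "M' = Max (R b - {M})"
        have "R b - {M} \<noteq> {}"
          using other M(1) by blast
        moreover have "finite (R b - {M})"
          using fin by simp
        ultimately have M': "M' \<in> R b - {M}" "\<And>x. x \<in> R b - {M} \<Longrightarrow> x \<le> M'"
          unfolding M'_def by (auto intro: Max_in Max_ge simp del: Diff_iff)
        have "M' < M"
          using M'(1) M(2)[of M'] by auto
        have R_eq: "R b = insert M (R M')" "M \<notin> R M'"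
        proof -
          show "M \<notin> R M'"
            using \<open>M' < M\<close> by (simp add: R_def)
          have "R M' \<subseteq> R b"
            using M'(1) by (auto simp: R_def)
          moreover have "x \<in> R M'" if "x \<in> R b" "x \<noteq> M" for x
            using that M'(2)[of x] by (simp add: R_def)
          ultimately show "R b = insert M (R M')"
            using M(1) by blast
        qed
        have "poly p M' = 0" "poly p M = 0" "a \<le> M'" "M \<le> b"
          using M'(1) M(1) by (simp_all add: R_def)
        then obtain c where c: "M' < c" "c < M" "poly (pderiv p) c = 0"
          using poly_MVT[OF \<open>M' < M\<close>, of p] \<open>M' < M\<close> by auto
        let ?R' = "{x. poly (pderiv p) x = 0 \<and> a \<le> x \<and> x \<le> M'}"
        have "card (R M') < k"
          using R_eq fin less.prems by simp
        have sum_R': "(\<Sum>x\<in>insert c (insert M ?R'). order x (pderiv p))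
                      = order c (pderiv p) + order M (pderiv p) + roots_between (pderiv p) a M'"
          using c \<open>M' < M\<close> finite_roots_between[OF nonconst] by (simp add: roots_between_def)
        have "0 < order c (pderiv p)"
          using c nonconst order_gt_0_iff by blast
        have "roots_between p a b = order M p + roots_between p a M'"
          using R_eq fin by (simp add: roots_between_def R_def[symmetric])
        also have "\<dots> \<le> order M p + roots_between (pderiv p) a M' + 1"
          using less.IH[OF \<open>card (R M') < k\<close> refl] by simp
        also have "\<dots> \<le> (\<Sum>x\<in>insert c (insert M ?R'). order x (pderiv p)) + 1"
          unfolding sum_R' ordM using \<open>0 < order c (pderiv p)\<close> by simp
        also have "(\<Sum>x\<in>insert c (insert M ?R'). order x (pderiv p)) \<le> roots_between (pderiv p) a b"
          using c \<open>M' < M\<close> \<open>a \<le> M'\<close> \<open>M \<le> b\<close> finite_roots_between[OF nonconst]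
          by (intro sum_order_le_roots_between nonconst) auto
        finally show ?thesis
          by simp
      qed
    qed
  qed
  show ?thesis
    by (rule claim[OF refl])
qed

lemma roots_between_le_1:
  assumes "p \<noteq> 0" "\<And>x. a \<le> x \<Longrightarrow> x \<le> b \<Longrightarrow> poly (pderiv p) x \<noteq> 0"
  shows "roots_between p a b \<le> 1"
  using roots_between_le_pderiv[OF assms(1), of a b] roots_between_eq_0[OF assms(2)] by simp

lemma roots_between_le_2:
  assumes "p \<noteq> 0" "a \<le> b" "\<And>x. a \<le> x \<Longrightarrow> x \<le> b \<Longrightarrow> poly (pderiv (pderiv p)) x \<noteq> 0"
  shows "roots_between p a b \<le> 2"
proof -
  have "pderiv p \<noteq> 0"
    using assms(2) assms(3)[of a] by auto
  then show ?thesis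
    using roots_between_le_pderiv[OF assms(1), of a b] roots_between_le_1[OF _ assms(3)] by fastforce
qed

lemma roots_between_le_sum:
  assumes "p \<noteq> 0" "antimono_on {..Suc n} c"
  shows "roots_between p (c (Suc n)) (c 0) \<le> (\<Sum>j\<le>n. roots_between p (c (Suc j)) (c j))"
  using assms(2)
proof (induction n)
  case (Suc n)
  have "antimono_on {..Suc n} c"
    using Suc.prems by (rule monotone_on_subset) auto
  have "roots_between p (c (Suc (Suc n))) (c 0)
        \<le> roots_between p (c (Suc (Suc n))) (c (Suc n)) + roots_between p (c (Suc n)) (c 0)"
    using Suc.prems by (intro roots_between_subadditive assms(1)) (auto simp: monotone_on_def)
  also have "\<dots> \<le> (\<Sum>j\<le>Suc n. roots_between p (c (Suc j)) (c j))"
    using Suc.IH[OF \<open>antimono_on {..Suc n} c\<close>] by simp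
  finally show ?case .
qed simp

lemma card_le_roots_between:
  assumes "p \<noteq> 0" "finite J"
    and root: "\<And>j. j \<in> J \<Longrightarrow> \<exists>x. l j < x \<and> x < r j \<and> poly p x = 0"
    and within: "\<And>j. j \<in> J \<Longrightarrow> a \<le> l j \<and> r j \<le> b"
    and disjoint: "\<And>i j. i \<in> J \<Longrightarrow> j \<in> J \<Longrightarrow> i \<noteq> j \<Longrightarrow> r i \<le> l j \<or> r j \<le> l i"
  shows "card J \<le> roots_between p a b"
proof -
  obtain x where x: "\<And>j. j \<in> J \<Longrightarrow> l j < x j \<and> x j < r j \<and> poly p (x j) = 0"
    using root by metis
  have "inj_on x J"
  proof (rule inj_onI, rule ccontr)
    fix i j
    assume "i \<in> J" "j \<in> J" "x i = x j" "i \<noteq> j"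
    then show False
      using x[of i] x[of j] disjoint[of i j] by auto
  qed
  then have "card J = (\<Sum>y\<in>x ` J. 1)"
    by (simp add: card_image)
  also have "\<dots> \<le> (\<Sum>y\<in>x ` J. order y p)"
    using x assms(1) by (intro sum_mono) (auto simp: Suc_le_eq order_gt_0_iff)
  also have "\<dots> \<le> roots_between p a b"
    using x within assms(1,2) by (intro sum_order_le_roots_between) force+
  finally show ?thesis .
qed

lemma card_nat_between_ge:
  assumes "0 \<le> A"
  shows "B - A - 1 \<le> real (card {j::nat. A < real j \<and> real j < B})"
proof (cases "B - A - 1 \<le> 0")
  case False
  define k0 where "k0 = nat \<lfloor>A\<rfloor> + 1"
  define k1 where "k1 = nat \<lceil>B\<rceil>"
  have "finite {j::nat. A < real j \<and> real j < B}"
    by (rule finite_subset[of _ "{..<nat \<lceil>B\<rceil>}"]) (auto, linarith)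
  moreover have "{k0..<k1} \<subseteq> {j::nat. A < real j \<and> real j < B}"
    unfolding k0_def k1_def using assms by auto linarith+
  ultimately have "card {k0..<k1} \<le> card {j::nat. A < real j \<and> real j < B}"
    by (rule card_mono)
  moreover have "B - A - 1 \<le> real (card {k0..<k1})"
    unfolding k0_def k1_def using assms False by simp linarith
  ultimately show ?thesis
    by linarith
qed simp

lemma card_nat_between_le:
  assumes "A \<le> B"
  shows "real (card {j::nat. A \<le> real j \<and> real j \<le> B}) \<le> B - A + 1"
proof (cases "B < 0")
  case True
  then have empty: "{j::nat. A \<le> real j \<and> real j \<le> B} = {}"
    by auto
  show ?thesis
    unfolding empty using assms by simp
next
  case False
  have "{j::nat. A \<le> real j \<and> real j \<le> B} \<subseteq> {nat \<lceil>A\<rceil>..nat \<lfloor>B\<rfloor>}"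
    by auto linarith+
  then have "card {j::nat. A \<le> real j \<and> real j \<le> B} \<le> card {nat \<lceil>A\<rceil>..nat \<lfloor>B\<rfloor>}"
    by (rule card_mono[rotated]) simp
  moreover have "real (card {nat \<lceil>A\<rceil>..nat \<lfloor>B\<rfloor>}) \<le> B - A + 1"
    using False assms by (simp add: of_nat_diff) linarith
  ultimately show ?thesis
    by linarith
qed

section \<open>Reduction of \<open>P\<^sub>2\<^sub>n\<close> to \<open>Q\<^sub>n\<close>\<close>

definition F_poly :: "'a::comm_ring_1 poly" where
  "F_poly = [:1, 0, -12, 0, 16:]"

definition Q_poly :: "nat \<Rightarrow> 'a::comm_ring_1 poly" where
  "Q_poly n = smult 2 (cheb_poly n) + F_poly"

lemma poly_F_poly: "poly F_poly x = 1 - 12 * x\<^sup>2 + 16 * x ^ 4"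
  by (simp add: F_poly_def algebra_simps eval_nat_numeral)

lemma poly_F_poly_joukowski:
  fixes z w :: "'a::field_char_0"
  assumes "z * w = 1"
  shows "poly F_poly ((z + w) / 2) = z ^ 4 + z\<^sup>2 + 1 + w\<^sup>2 + w ^ 4"
proof -
  have "poly F_poly ((z + w) / 2) = 1 - 3 * (z + w)\<^sup>2 + (z + w) ^ 4"
    by (simp add: poly_F_poly power_divide)
  also have "\<dots> = z ^ 4 + z\<^sup>2 + 1 + w\<^sup>2 + w ^ 4"
    using assms by algebra
  finally show ?thesis .
qed

lemma poly_Q_poly_cos: "poly (Q_poly n) (cos t) = 2 * cos (real n * t) + poly F_poly (cos t)"
  by (simp add: Q_poly_def poly_cheb_poly_cos)

lemma map_poly_of_real_Q_poly:
  "map_poly of_real (Q_poly n) = (Q_poly n :: 'a::{real_algebra_1,comm_ring_1} poly)"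
proof -
  have "map_poly of_real (Q_poly n) = smult 2 (map_poly of_real (cheb_poly n)) + (F_poly :: 'a poly)"
    by (simp add: Q_poly_def F_poly_def poly_eq_iff coeff_map_poly coeff_pCons split: nat.split)
  then show ?thesis
    by (simp add: map_poly_of_real_cheb_poly Q_poly_def)
qed

lemma degree_Q_poly:
  assumes "4 < n"
  shows "degree (Q_poly n :: 'a::{comm_ring_1,ring_char_0} poly) = n"
    and "lead_coeff (Q_poly n :: 'a poly) = 2 ^ n"
proof -
  obtain m where m: "n = Suc m"
    using assms by (cases n) auto
  have coeff_F: "coeff (F_poly :: 'a poly) k = 0" if "4 < k" for k
    using that by (simp add: F_poly_def coeff_pCons split: nat.split)
  have top: "coeff (Q_poly n :: 'a poly) n = 2 ^ n"
    using coeff_F[OF assms] coeff_cheb_poly_Suc[of m, where 'a='a] by (simp add: Q_poly_def m)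
  have "degree (Q_poly n :: 'a poly) \<le> n"
    using assms by (intro degree_le) (simp add: Q_poly_def coeff_cheb_poly_eq_0 coeff_F)
  moreover have "coeff (Q_poly n :: 'a poly) n \<noteq> 0"
    unfolding top by (metis of_nat_numeral of_nat_power of_nat_eq_0_iff power_not_zero zero_neq_numeral)
  ultimately show "degree (Q_poly n :: 'a poly) = n"
    by (meson le_antisym le_degree)
  then show "lead_coeff (Q_poly n :: 'a poly) = 2 ^ n"
    by (simp add: top)
qed

lemma Q_poly_nonzero: "4 < n \<Longrightarrow> (Q_poly n :: 'a::{comm_ring_1,ring_char_0} poly) \<noteq> 0"
  using degree_Q_poly[of n, where 'a='a] by auto

lemma poly_P2n:
  fixes z :: complex
  assumes "z \<noteq> 0" "4 < n"
  shows "poly (P2n n) z = z ^ n * poly (Q_poly n) ((z + inverse z) / 2)"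
proof -
  obtain m where m: "n = m + 4"
    using assms(2) by (metis add.commute less_imp_add_positive)
  have Q_eq: "poly (Q_poly n) ((z + inverse z) / 2)
        = z ^ n + inverse z ^ n + (z ^ 4 + z\<^sup>2 + 1 + inverse z ^ 2 + inverse z ^ 4)"
    using cheb_poly_joukowski[OF assms(1), of n] poly_F_poly_joukowski[of z "inverse z"] assms(1)
    by (simp add: Q_poly_def)
  have exps: "n - 2 = m + 2" "n - 4 = m" "2 * n = m + m + 8" "n + 4 = m + 8" "n + 2 = m + 6"
    "z ^ (m * 2) = z ^ m * z ^ m"
    using m by (auto simp: power_mult power2_eq_square)
  show ?thesis
    unfolding Q_eq P2n_def using assms(1)
    by (simp add: poly_monom exps m field_simps power_add) (simp add: eval_nat_numeral)
qed

lemma poly_eqI_nonzero: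
  fixes p q :: "'a::{idom,ring_char_0} poly"
  assumes "\<And>z. z \<noteq> 0 \<Longrightarrow> poly p z = poly q z"
  shows "p = q"
proof (rule ccontr)
  assume "p \<noteq> q"
  then have "finite {z. poly (p - q) z = 0}"
    by (intro poly_roots_finite) simp
  moreover have "UNIV - {0} \<subseteq> {z. poly (p - q) z = 0}"
    using assms by auto
  ultimately have "finite (UNIV - {0::'a})"
    by (rule rev_finite_subset)
  then show False
    by (simp add: infinite_UNIV_char_0)
qed

lemma P2n_eq_prod_proots_Q_poly:
  assumes "4 < n"
  shows "P2n n = (\<Prod>x\<in>#proots (Q_poly n). [:1, - (2 * x), 1:])"
proof (rule poly_eqI_nonzero)
  fix z :: complex
  assume z: "z \<noteq> 0"
  define R where "R = proots (Q_poly n :: complex poly)"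
  have "size R = n"
    unfolding R_def by (simp add: size_proots_complex degree_Q_poly assms)
  have "poly (Q_poly n) ((z + inverse z) / 2) = 2 ^ n * (\<Prod>x\<in>#R. (z + inverse z) / 2 - x)"
    by (subst complex_poly_decompose_multiset[symmetric])
       (simp only: degree_Q_poly(2)[OF assms] poly_smult poly_prod_mset R_def, simp)
  then have "poly (P2n n) z = (\<Prod>x\<in>#R. 2 * z * ((z + inverse z) / 2 - x))"
    using poly_P2n[OF z assms] \<open>size R = n\<close>
    by (simp add: prod_mset.distrib power_mult_distrib)
  also have "\<dots> = (\<Prod>x\<in>#R. poly [:1, - (2 * x), 1:] z)"
    using z by (intro arg_cong[where f=prod_mset] image_mset_cong) (simp add: field_simps power2_eq_square)
  finally show "poly (P2n n) z = poly (\<Prod>x\<in>#proots (Q_poly n). [:1, - (2 * x), 1:]) z"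
    by (simp add: poly_prod_mset R_def)
qed

lemma norm_root_recip_quadratic:
  assumes "-1 \<le> t" "t \<le> 1" "poly [:1, - (2 * complex_of_real t), 1:] z = 0"
  shows "cmod z = 1"
proof -
  define u v where "u = Re z" "v = Im z"
  have e: "1 - 2 * complex_of_real t * z + z\<^sup>2 = 0"
    using assms(3) by (simp add: algebra_simps power2_eq_square)
  have re: "1 - 2 * t * u + u\<^sup>2 - v\<^sup>2 = 0"
    using arg_cong[OF e, of Re] by (simp add: u_v_def power2_eq_square)
  have im: "v * (u - t) = 0"
    using arg_cong[OF e, of Im] by (simp add: u_v_def power2_eq_square algebra_simps)
  have "u\<^sup>2 + v\<^sup>2 = 1"
  proof (cases "v = 0")
    case True
    then have "(u - t)\<^sup>2 = t\<^sup>2 - 1"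
      using re by (simp add: power2_eq_square algebra_simps)
    moreover have "t\<^sup>2 \<le> 1"
      using assms(1,2) abs_square_le_1[of t] by simp
    ultimately have "(u - t)\<^sup>2 = 0" "t\<^sup>2 = 1"
      using zero_le_power2[of "u - t"] by linarith+
    then show ?thesis
      using True by simp
  next
    case False
    then have "u = t"
      using im by simp
    then show ?thesis
      using re by (simp add: power2_eq_square algebra_simps)
  qed
  then show ?thesis
    by (simp add: cmod_def u_v_def)
qed

lemma unit_interval_if_unimodular_root_recip_quadratic:
  assumes "poly [:1, - (2 * x), 1:] z = 0" "cmod z = 1"
  shows "x \<in> complex_of_real ` {-1..1}"
proof -
  have "z \<noteq> 0"
    using assms(2) by auto
  have "inverse z = cnj z"
    using assms(2) complex_norm_square[of z] by (intro inverse_unique) simp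
  have "x = (z + inverse z) / 2"
    using assms(1) \<open>z \<noteq> 0\<close> by (simp add: field_simps power2_eq_square)
  also have "\<dots> = complex_of_real (Re z)"
    unfolding \<open>inverse z = cnj z\<close> by (simp add: complex_add_cnj)
  finally show ?thesis
    using abs_Re_le_cmod[of z] assms(2) by (auto simp: abs_le_iff)
qed

lemma size_proots_recip_quadratic_off_circle:
  "size {#z \<in># proots [:1, - (2 * x), 1:]. cmod z \<noteq> 1#} = (if x \<in> complex_of_real ` {-1..1} then 0 else 2)"
proof (cases "x \<in> complex_of_real ` {-1..1}")
  case True
  then have "{#z \<in># proots [:1, - (2 * x), 1:]. cmod z \<noteq> 1#} = {#}"
    using norm_root_recip_quadratic by (auto simp: filter_mset_eq_mempty_iff)
  then show ?thesis
    using True by simp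
next
  case False
  then have "{#z \<in># proots [:1, - (2 * x), 1:]. cmod z \<noteq> 1#} = proots [:1, - (2 * x), 1:]"
    using unit_interval_if_unimodular_root_recip_quadratic by (auto simp: filter_mset_eq_conv)
  then show ?thesis
    using False by (simp add: size_proots_complex)
qed

lemma size_filter_proots:
  assumes "p \<noteq> 0"
  shows "size {#x \<in># proots p. P x#} = (\<Sum>x | poly p x = 0 \<and> P x. order x p)"
proof -
  have "size {#x \<in># proots p. P x#} = (\<Sum>x\<in>set_mset {#x \<in># proots p. P x#}. count {#x \<in># proots p. P x#} x)"
    by (rule size_multiset_overloaded_eq)
  also have "\<dots> = (\<Sum>x | poly p x = 0 \<and> P x. order x p)"
    using assms by (intro sum.cong) auto
  finally show ?thesis .
qed

lemma filter_mset_sum_mset_image: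
  "filter_mset P (\<Sum>x\<in>#A. f x) = (\<Sum>x\<in>#A. filter_mset P (f x))"
  by (induction A) auto

lemma zeros_inside_plus_zeros_outside:
  assumes "p \<noteq> 0"
  shows "zeros_inside p + zeros_outside p = size {#z \<in># proots p. cmod z \<noteq> 1#}"
proof -
  have "{#z \<in># proots p. cmod z < 1#} + {#z \<in># proots p. cmod z > 1#} = {#z \<in># proots p. cmod z \<noteq> 1#}"
    by (rule multiset_eqI) auto
  then show ?thesis
    unfolding zeros_inside_def zeros_outside_def
    by (metis size_union size_filter_proots[OF assms])
qed

lemma size_proots_of_real_between:
  fixes p :: "real poly"
  assumes "p \<noteq> 0"
  shows "size {#z \<in># proots (map_poly complex_of_real p). z \<in> complex_of_real ` {a..b}#} = roots_between p a b"
proof -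
  let ?R = "{x. poly p x = 0 \<and> a \<le> x \<and> x \<le> b}"
  have "{z. poly (map_poly complex_of_real p) z = 0 \<and> z \<in> complex_of_real ` {a..b}} = complex_of_real ` ?R"
    using poly_map_poly_of_real[where 'a=complex, of p] by auto
  then have "size {#z \<in># proots (map_poly complex_of_real p). z \<in> complex_of_real ` {a..b}#}
             = (\<Sum>z\<in>complex_of_real ` ?R. order z (map_poly complex_of_real p))"
    using assms by (simp add: size_filter_proots map_poly_eq_0_iff)
  also have "\<dots> = (\<Sum>x\<in>?R. order x p)"
    using assms by (subst sum.reindex) (auto simp: inj_on_def order_map_poly_of_real)
  finally show ?thesis
    by (simp add: roots_between_def)
qed

lemma C_ratio_P2n:
  assumes "4 < n"
  shows "C_ratio (P2n n) = 1 - real (roots_between (Q_poly n) (-1) 1) / real n"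
proof -
  define R where "R = proots (Q_poly n :: complex poly)"
  define on_interval where "on_interval x \<longleftrightarrow> x \<in> complex_of_real ` {-1..1}" for x
  have "size R = n"
    unfolding R_def by (simp add: size_proots_complex degree_Q_poly assms)
  have no_zero_factor: "0 \<notin># image_mset (\<lambda>x. [:1, - (2 * x), 1:]) R"
    by auto
  have proots_P: "proots (P2n n) = (\<Sum>x\<in>#R. proots [:1, - (2 * x), 1:])"
    unfolding P2n_eq_prod_proots_Q_poly[OF assms] R_def[symmetric]
    using proots_prod_mset[OF no_zero_factor] by (simp add: image_mset.compositionality o_def)
  have "degree (P2n n) = size (proots (P2n n))"
    by (simp add: size_proots_complex)
  also have "\<dots> = 2 * n"
    unfolding proots_P using \<open>size R = n\<close>
    by (simp add: size_proots_complex sum_mset_constant image_mset.compositionality o_def)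
  finally have deg: "degree (P2n n) = 2 * n" .
  have "P2n n \<noteq> 0"
    using deg assms by auto
  have roots_R: "size {#x \<in># R. on_interval x#} = roots_between (Q_poly n) (-1) 1"
    using size_proots_of_real_between[OF Q_poly_nonzero[OF assms]]
    by (simp add: map_poly_of_real_Q_poly R_def on_interval_def)
  have "zeros_inside (P2n n) + zeros_outside (P2n n) = size {#z \<in># proots (P2n n). cmod z \<noteq> 1#}"
    by (rule zeros_inside_plus_zeros_outside[OF \<open>P2n n \<noteq> 0\<close>])
  also have "\<dots> = (\<Sum>x\<in>#R. if on_interval x then 0 else 2)"
    unfolding proots_P on_interval_def
    by (simp add: size_proots_recip_quadratic_off_circle filter_mset_sum_mset_image image_mset.compositionality o_def)
  also have "\<dots> = 2 * size {#x \<in># R. \<not> on_interval x#}"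
    by (induction R) auto
  also have "size {#x \<in># R. \<not> on_interval x#} = n - roots_between (Q_poly n) (-1) 1"
  proof -
    have "size R = size {#x \<in># R. on_interval x#} + size {#x \<in># R. \<not> on_interval x#}"
      by (metis multiset_partition size_union)
    then show ?thesis
      using \<open>size R = n\<close> roots_R by simp
  qed
  finally have "zeros_inside (P2n n) + zeros_outside (P2n n) = 2 * (n - roots_between (Q_poly n) (-1) 1)" .
  moreover have "roots_between (Q_poly n) (-1) 1 \<le> n"
    using roots_R \<open>size R = n\<close> size_filter_mset_lesseq[of on_interval R] by simp
  ultimately show ?thesis
    unfolding C_ratio_def deg using assms by (simp add: field_simps of_nat_diff)
qed

section \<open>The quartic \<open>F\<close> and the critical angle\<close>

definition alpha :: real where
  "alpha = arccos (sqrt (3/8 + sqrt 13 / 8))"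

lemma sqrt_13_bounds: "18 \<le> 5 * sqrt (13::real)" "sqrt (13::real) < 4"
proof -
  have "sqrt (18\<^sup>2) \<le> sqrt (5\<^sup>2 * 13::real)" "sqrt (13::real) < sqrt (4\<^sup>2)"
    by (subst real_sqrt_le_iff real_sqrt_less_iff; simp)+
  then show "18 \<le> 5 * sqrt (13::real)" "sqrt (13::real) < 4"
    by (simp_all only: real_sqrt_mult real_sqrt_abs abs_numeral)
qed

lemma alpha_bounds: "0 < alpha" "alpha < pi / 2"
  and cos_alpha_sq: "(cos alpha)\<^sup>2 = (3 + sqrt 13) / 8"
proof -
  define a where "a = sqrt (3/8 + sqrt 13 / 8)"
  have "0 < a"
    unfolding a_def using sqrt_13_bounds by simp
  have "a\<^sup>2 = (3 + sqrt 13) / 8"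
    unfolding a_def by (simp add: add_divide_distrib)
  moreover have "(3 + sqrt 13) / 8 < (1::real)"
    using sqrt_13_bounds by simp
  ultimately have "a < 1"
    using \<open>0 < a\<close> by (metis abs_of_pos power2_less_1_iff)
  have "cos alpha = a"
    unfolding alpha_def a_def[symmetric] using \<open>0 < a\<close> \<open>a < 1\<close> by (simp add: cos_arccos)
  then show "(cos alpha)\<^sup>2 = (3 + sqrt 13) / 8"
    using \<open>a\<^sup>2 = _\<close> by simp
  show "0 < alpha"
    unfolding alpha_def a_def[symmetric] using \<open>a < 1\<close> arccos_lt_bounded[of a] \<open>0 < a\<close> by simp
  have "arccos a < arccos 0"
    using \<open>0 < a\<close> \<open>a < 1\<close> by (intro arccos_less_arccos) auto
  then show "alpha < pi / 2"
    by (simp add: alpha_def a_def)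
qed

lemma F_poly_minus_2:
  "poly F_poly x - 2 = 16 * (x\<^sup>2 - (cos alpha)\<^sup>2) * (x\<^sup>2 - (3 - sqrt 13) / 8)"
proof -
  define r where "r = (3 - sqrt 13) / 8"
  have "sqrt 13 * sqrt 13 = (13::real)"
    by simp
  then have sum: "(cos alpha)\<^sup>2 + r = 3/4" and prod: "(cos alpha)\<^sup>2 * r = -1/16"
    by (simp_all add: cos_alpha_sq r_def field_simps)
  have "16 * (x\<^sup>2 - (cos alpha)\<^sup>2) * (x\<^sup>2 - r)
        = 16 * x ^ 4 - 16 * ((cos alpha)\<^sup>2 + r) * x\<^sup>2 + 16 * ((cos alpha)\<^sup>2 * r)"
    by (simp add: algebra_simps power2_eq_square eval_nat_numeral)
  also have "\<dots> = poly F_poly x - 2"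
    unfolding sum prod poly_F_poly by simp
  finally show ?thesis
    by (simp add: r_def)
qed

lemma F_poly_gt_2:
  assumes "(cos alpha)\<^sup>2 < x\<^sup>2"
  shows "2 < poly F_poly (x::real)"
proof -
  have "0 < 16 * (x\<^sup>2 - (cos alpha)\<^sup>2) * (x\<^sup>2 - (3 - sqrt 13) / 8)"
    using assms sqrt_13_bounds zero_le_power2[of "cos alpha"] by (intro mult_pos_pos) argo+
  then show ?thesis
    using F_poly_minus_2[of x] by linarith
qed

lemma F_poly_le:
  assumes "x\<^sup>2 \<le> (cos alpha)\<^sup>2"
  shows "poly F_poly (x::real) \<le> 2 - 6/5 * ((cos alpha)\<^sup>2 - x\<^sup>2)"
proof -
  define d where "d = (cos alpha)\<^sup>2 - x\<^sup>2"
  define k where "k = 16 * (x\<^sup>2 - (3 - sqrt 13) / 8)"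
  have "6/5 \<le> k"
    unfolding k_def using sqrt_13_bounds zero_le_power2[of x] by argo
  then have "d * (6/5) \<le> d * k"
    using assms by (intro mult_left_mono) (auto simp: d_def)
  moreover have "poly F_poly x - 2 = - (d * k)"
    unfolding F_poly_minus_2 d_def k_def by (simp add: field_simps)
  ultimately show ?thesis
    unfolding d_def[symmetric] by linarith
qed

lemma F_poly_ge: "- 5/4 \<le> poly F_poly (x::real)"
proof -
  have "poly F_poly x + 5/4 = (4 * x\<^sup>2 - 3/2)\<^sup>2"
    by (simp add: poly_F_poly power2_eq_square algebra_simps eval_nat_numeral)
  then show ?thesis
    using zero_le_power2[of "4 * x\<^sup>2 - 3/2"] by linarith
qed

lemma abs_pderiv_F_poly_le: "\<bar>x\<bar> \<le> 1 \<Longrightarrow> \<bar>poly (pderiv F_poly) x\<bar> \<le> (88::real)"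
proof -
  assume x: "\<bar>x\<bar> \<le> 1"
  then have "\<bar>x ^ 3\<bar> \<le> 1"
    by (simp add: power_abs power_le_one)
  moreover have "poly (pderiv F_poly) x = 64 * x ^ 3 - 24 * x"
    by (simp add: F_poly_def pderiv_pCons algebra_simps eval_nat_numeral)
  ultimately show ?thesis
    using x by (simp add: abs_le_iff)
qed

lemma abs_pderiv2_F_poly_le: "\<bar>x\<bar> \<le> 1 \<Longrightarrow> \<bar>poly (pderiv (pderiv F_poly)) x\<bar> \<le> (216::real)"
proof -
  assume "\<bar>x\<bar> \<le> 1"
  then have "x\<^sup>2 \<le> 1"
    by (simp add: abs_square_le_1)
  moreover have "poly (pderiv (pderiv F_poly)) x = 192 * x\<^sup>2 - 24"
    by (simp add: F_poly_def pderiv_pCons algebra_simps eval_nat_numeral)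
  ultimately show ?thesis
    using zero_le_power2[of x] unfolding abs_le_iff by linarith
qed

section \<open>Roots of \<open>Q\<^sub>n\<close> in angular windows\<close>

lemma obtain_cos_preimage:
  assumes "0 \<le> ta" "ta \<le> tb" "tb \<le> pi" "cos tb \<le> x" "x \<le> cos ta"
  obtains t where "ta \<le> t" "t \<le> tb" "x = cos t"
proof -
  have x: "-1 \<le> x" "x \<le> 1"
    using assms(4,5) cos_ge_minus_one[of tb] cos_le_one[of ta] by linarith+
  have "arccos (cos ta) \<le> arccos x" "arccos x \<le> arccos (cos tb)"
    using x assms by (auto intro!: arccos_le_arccos)
  moreover have "arccos (cos ta) = ta" "arccos (cos tb) = tb"
    using assms by (auto intro!: arccos_cos)
  ultimately show ?thesis
    using that[of "arccos x"] x by (simp add: cos_arccos)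
qed

lemma sin_le_sin_inner:
  assumes "0 \<le> p" "p \<le> pi / 2" "p \<le> t" "t \<le> pi - p"
  shows "sin p \<le> sin t"
proof (cases "t \<le> pi / 2")
  case True
  then show ?thesis
    using assms by (intro sin_monotone_2pi_le) auto
next
  case False
  have "sin p \<le> sin (pi - t)"
    using assms False by (intro sin_monotone_2pi_le) auto
  then show ?thesis
    by simp
qed

lemma roots_between_cos_eq_0:
  assumes "0 \<le> ta" "ta \<le> tb" "tb \<le> pi" "\<And>t. ta \<le> t \<Longrightarrow> t \<le> tb \<Longrightarrow> poly p (cos t) \<noteq> 0"
  shows "roots_between p (cos tb) (cos ta) = 0"
proof (rule roots_between_eq_0)
  fix x
  assume "cos tb \<le> x" "x \<le> cos ta"
  with assms(1-3) obtain t where "ta \<le> t" "t \<le> tb" "x = cos t"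
    by (rule obtain_cos_preimage)
  then show "poly p x \<noteq> 0"
    using assms(4) by simp
qed

lemma roots_between_cos_le_1:
  assumes "p \<noteq> 0" "0 \<le> ta" "ta \<le> tb" "tb \<le> pi"
    and "\<And>t. ta \<le> t \<Longrightarrow> t \<le> tb \<Longrightarrow> poly (pderiv p) (cos t) \<noteq> 0"
  shows "roots_between p (cos tb) (cos ta) \<le> 1"
proof (rule roots_between_le_1[OF assms(1)])
  fix x
  assume "cos tb \<le> x" "x \<le> cos ta"
  with assms(2-4) obtain t where "ta \<le> t" "t \<le> tb" "x = cos t"
    by (rule obtain_cos_preimage)
  then show "poly (pderiv p) x \<noteq> 0"
    using assms(5) by simp
qed

lemma roots_between_cos_le_2:
  assumes "p \<noteq> 0" "0 \<le> ta" "ta \<le> tb" "tb \<le> pi"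
    and "\<And>t. ta \<le> t \<Longrightarrow> t \<le> tb \<Longrightarrow> poly (pderiv (pderiv p)) (cos t) \<noteq> 0"
  shows "roots_between p (cos tb) (cos ta) \<le> 2"
proof (rule roots_between_le_2[OF assms(1)])
  show "cos tb \<le> cos ta"
    using assms(2-4) by (intro cos_monotone_0_pi_le) auto
  fix x
  assume "cos tb \<le> x" "x \<le> cos ta"
  with assms(2-4) obtain t where "ta \<le> t" "t \<le> tb" "x = cos t"
    by (rule obtain_cos_preimage)
  then show "poly (pderiv (pderiv p)) x \<noteq> 0"
    using assms(5) by simp
qed

lemma poly_pderiv_Q_poly_cos:
  "poly (pderiv (Q_poly n)) (cos t) * sin t
   = 2 * real n * sin (real n * t) + poly (pderiv F_poly) (cos t) * sin t"
  using poly_pderiv_cheb_poly_cos[of n t] by (simp add: Q_poly_def pderiv_add pderiv_smult algebra_simps)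

lemma poly_pderiv2_Q_poly_cos:
  "poly (pderiv (pderiv (Q_poly n))) (cos t) * (sin t)\<^sup>2
   = 2 * (cos t * poly (pderiv (cheb_poly n)) (cos t) - (real n)\<^sup>2 * cos (real n * t))
     + poly (pderiv (pderiv F_poly)) (cos t) * (sin t)\<^sup>2"
  using poly_pderiv2_cheb_poly_cos[of n t] by (simp add: Q_poly_def pderiv_add pderiv_smult algebra_simps)

lemma roots_Q_poly_beyond_alpha:
  assumes "0 \<le> ta" "ta \<le> tb" "tb \<le> pi" "tb < alpha \<or> pi - alpha < ta"
  shows "roots_between (Q_poly n) (cos tb) (cos ta) = 0"
proof (rule roots_between_cos_eq_0[OF assms(1-3)])
  fix t
  assume t: "ta \<le> t" "t \<le> tb"
  have "cos alpha < \<bar>cos t\<bar>"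
    using assms(4)
  proof
    assume "tb < alpha"
    then have "cos alpha < cos t"
      using assms t alpha_bounds by (intro cos_monotone_0_pi) auto
    then show ?thesis
      by simp
  next
    assume "pi - alpha < ta"
    then have "cos t < cos (pi - alpha)"
      using assms t alpha_bounds by (intro cos_monotone_0_pi) auto
    then show ?thesis
      by simp
  qed
  moreover have "0 < cos alpha"
    using alpha_bounds by (intro cos_gt_zero_pi) auto
  ultimately have "(cos alpha)\<^sup>2 < \<bar>cos t\<bar>\<^sup>2"
    by (intro power_strict_mono) auto
  then have "(cos alpha)\<^sup>2 < (cos t)\<^sup>2"
    by simp
  then have "2 < poly F_poly (cos t)"
    by (rule F_poly_gt_2)
  then show "poly (Q_poly n) (cos t) \<noteq> 0"
    using cos_ge_minus_one[of "real n * t"] unfolding poly_Q_poly_cos by linarith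
qed

lemma roots_Q_poly_cos_positive:
  assumes "0 \<le> ta" "ta \<le> tb" "tb \<le> pi" "5/8 < c0"
    and "\<And>t. ta \<le> t \<Longrightarrow> t \<le> tb \<Longrightarrow> c0 \<le> cos (real n * t)"
  shows "roots_between (Q_poly n) (cos tb) (cos ta) = 0"
proof (rule roots_between_cos_eq_0[OF assms(1-3)])
  fix t
  assume "ta \<le> t" "t \<le> tb"
  then show "poly (Q_poly n) (cos t) \<noteq> 0"
    using assms(4,5) F_poly_ge[of "cos t"] by (fastforce simp: poly_Q_poly_cos)
qed

lemma roots_Q_poly_cos_negative:
  assumes "0 \<le> ta" "ta \<le> tb" "tb \<le> pi"
    and "\<And>t. ta \<le> t \<Longrightarrow> t \<le> tb \<Longrightarrow> cos (real n * t) \<le> - c0 \<and> poly F_poly (cos t) < 2 * c0"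
  shows "roots_between (Q_poly n) (cos tb) (cos ta) = 0"
proof (rule roots_between_cos_eq_0[OF assms(1-3)])
  fix t
  assume "ta \<le> t" "t \<le> tb"
  then show "poly (Q_poly n) (cos t) \<noteq> 0"
    using assms(4) by (fastforce simp: poly_Q_poly_cos)
qed

lemma roots_Q_poly_sin_bounded_below:
  assumes "4 < n" "0 \<le> ta" "ta \<le> tb" "tb \<le> pi" "44 < real n * s0"
    and "\<And>t. ta \<le> t \<Longrightarrow> t \<le> tb \<Longrightarrow> s0 \<le> \<bar>sin (real n * t)\<bar>"
  shows "roots_between (Q_poly n) (cos tb) (cos ta) \<le> 1"
proof (rule roots_between_cos_le_1[OF Q_poly_nonzero[OF assms(1)] assms(2-4)])
  fix t
  assume t: "ta \<le> t" "t \<le> tb"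
  have "\<bar>poly (pderiv F_poly) (cos t)\<bar> * \<bar>sin t\<bar> \<le> 88 * 1"
    by (intro mult_mono abs_pderiv_F_poly_le) auto
  moreover have "real n * s0 \<le> real n * \<bar>sin (real n * t)\<bar>"
    using assms(6)[OF t] by (intro mult_left_mono) auto
  moreover have "\<bar>2 * real n * sin (real n * t)\<bar> = 2 * (real n * \<bar>sin (real n * t)\<bar>)"
    by (simp add: abs_mult)
  ultimately have "\<bar>poly (pderiv F_poly) (cos t) * sin t\<bar> < \<bar>2 * real n * sin (real n * t)\<bar>"
    using assms(5) by (simp add: abs_mult)
  then have "poly (pderiv (Q_poly n)) (cos t) * sin t \<noteq> 0"
    unfolding poly_pderiv_Q_poly_cos by linarith
  then show "poly (pderiv (Q_poly n)) (cos t) \<noteq> 0"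
    by auto
qed

text \<open>Where \<open>cos (n t) \<le> -c0\<close>, the term \<open>-2 n\<^sup>2 cos (n t)\<close> dominates the second derivative
  of \<open>Q_poly n (cos t)\<close>, so \<open>Q_poly n\<close> is convex there.\<close>

lemma roots_Q_poly_cos_negative_le_2:
  assumes "4 < n" "0 \<le> ta" "ta \<le> tb" "tb \<le> pi"
    and "7/10 \<le> c0" "\<And>t. ta \<le> t \<Longrightarrow> t \<le> tb \<Longrightarrow> cos (real n * t) \<le> - c0"
    and "0 < sg" "\<And>t. ta \<le> t \<Longrightarrow> t \<le> tb \<Longrightarrow> sg \<le> sin t"
    and "2 * (real n / sg) + 216 < 7/5 * (real n)\<^sup>2"
  shows "roots_between (Q_poly n) (cos tb) (cos ta) \<le> 2"
proof (rule roots_between_cos_le_2[OF Q_poly_nonzero[OF assms(1)] assms(2-4)])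
  fix t
  assume t: "ta \<le> t" "t \<le> tb"
  have sin_t: "sg \<le> sin t"
    using assms(8)[OF t] .
  have "0 < sin t"
    using sin_t assms(7) by linarith
  let ?T' = "poly (pderiv (cheb_poly n)) (cos t)"
  have "\<bar>?T'\<bar> * sin t = real n * \<bar>sin (real n * t)\<bar>"
    using arg_cong[OF poly_pderiv_cheb_poly_cos[of n t], of abs] \<open>0 < sin t\<close> by (simp add: abs_mult)
  also have "\<dots> \<le> real n"
    by (intro mult_left_le abs_sin_le_one) simp
  finally have "\<bar>?T'\<bar> * sg \<le> real n"
    using mult_left_mono[OF sin_t abs_ge_zero[of ?T']] by linarith
  then have "\<bar>?T'\<bar> \<le> real n / sg"
    using assms(7) by (simp add: pos_le_divide_eq)
  moreover have "\<bar>cos t\<bar> * \<bar>?T'\<bar> \<le> \<bar>?T'\<bar>"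
    by (intro mult_left_le_one_le) auto
  ultimately have T': "\<bar>cos t * ?T'\<bar> \<le> real n / sg"
    by (simp add: abs_mult)
  have "\<bar>poly (pderiv (pderiv F_poly)) (cos t)\<bar> * \<bar>(sin t)\<^sup>2\<bar> \<le> 216 * 1"
    by (intro mult_mono abs_pderiv2_F_poly_le) (auto simp: abs_square_le_1)
  then have F'': "\<bar>poly (pderiv (pderiv F_poly)) (cos t) * (sin t)\<^sup>2\<bar> \<le> 216"
    by (simp add: abs_mult)
  have "(real n)\<^sup>2 * (7/10) \<le> (real n)\<^sup>2 * - cos (real n * t)"
    using assms(5) assms(6)[OF t] by (intro mult_left_mono) auto
  then have "(real n)\<^sup>2 * (7/10) \<le> - ((real n)\<^sup>2 * cos (real n * t))"
    by simp
  then have "0 < poly (pderiv (pderiv (Q_poly n))) (cos t) * (sin t)\<^sup>2"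
    unfolding poly_pderiv2_Q_poly_cos using abs_le_D2[OF T'] abs_le_D2[OF F''] assms(9) by argo
  then show "poly (pderiv (pderiv (Q_poly n))) (cos t) \<noteq> 0"
    by auto
qed

lemma roots_Q_poly_end_segment:
  assumes "4 < n" "0 \<le> ta" "ta \<le> tb" "tb \<le> pi" "7/10 \<le> c0"
    and "0 < sg" "\<And>t. ta \<le> t \<Longrightarrow> t \<le> tb \<Longrightarrow> sg \<le> sin t"
    and "2 * (real n / sg) + 216 < 7/5 * (real n)\<^sup>2"
    and sign: "(\<forall>t\<in>{ta..tb}. c0 \<le> cos (real n * t)) \<or> (\<forall>t\<in>{ta..tb}. cos (real n * t) \<le> - c0)"
  shows "roots_between (Q_poly n) (cos tb) (cos ta) \<le> 2"
    and "(\<And>t. ta \<le> t \<Longrightarrow> t \<le> tb \<Longrightarrow> poly F_poly (cos t) < 2 * c0)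
         \<Longrightarrow> roots_between (Q_poly n) (cos tb) (cos ta) = 0"
proof -
  have pos: "roots_between (Q_poly n) (cos tb) (cos ta) = 0" if "\<forall>t\<in>{ta..tb}. c0 \<le> cos (real n * t)"
    using that assms(5) by (intro roots_Q_poly_cos_positive[OF assms(2-4)]) auto
  show "roots_between (Q_poly n) (cos tb) (cos ta) \<le> 2"
    using sign pos roots_Q_poly_cos_negative_le_2[OF assms(1-5) _ assms(6-8)] by fastforce
  show "roots_between (Q_poly n) (cos tb) (cos ta) = 0"
    if "\<And>t. ta \<le> t \<Longrightarrow> t \<le> tb \<Longrightarrow> poly F_poly (cos t) < 2 * c0"
    using sign pos roots_Q_poly_cos_negative[OF assms(2-4), of n c0] that by fastforce
qed

lemma window_phase_bounds:
  fixes n j :: nat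
  assumes "0 < n" "0 \<le> p" "p \<le> pi / 2"
  defines "t0 \<equiv> real j * pi / n"
  shows "t0 \<le> t \<Longrightarrow> t \<le> t0 + p / n \<Longrightarrow> cos p \<le> (-1) ^ j * cos (real n * t)"
    and "t0 + (pi - p) / n \<le> t \<Longrightarrow> t \<le> t0 + pi / n \<Longrightarrow> (-1) ^ j * cos (real n * t) \<le> - cos p"
    and "t0 + p / n \<le> t \<Longrightarrow> t \<le> t0 + (pi - p) / n \<Longrightarrow> sin p \<le> \<bar>sin (real n * t)\<bar>"
proof -
  define phase where "phase t = real n * (t - t0)" for t
  have shift: "real n * t = real j * pi + phase t" for t
    using assms(1) by (simp add: phase_def t0_def field_simps)
  have cos_nt: "(-1) ^ j * cos (real n * t) = cos (phase t)" for t
    unfolding shift[of t] by (simp add: cos_add cos_npi sin_npi)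
  have sin_nt: "\<bar>sin (real n * t)\<bar> = \<bar>sin (phase t)\<bar>" for t
    unfolding shift[of t] by (simp add: sin_add cos_npi sin_npi abs_mult)
  have phase_le_iff: "a \<le> phase t \<longleftrightarrow> t0 + a / n \<le> t" "phase t \<le> a \<longleftrightarrow> t \<le> t0 + a / n" for a t
    using assms(1) by (auto simp: phase_def field_simps)
  show "cos p \<le> (-1) ^ j * cos (real n * t)" if "t0 \<le> t" "t \<le> t0 + p / n"
  proof -
    have "0 \<le> phase t" "phase t \<le> p"
      using that by (simp_all add: phase_le_iff)
    then show ?thesis
      unfolding cos_nt using assms(2,3) by (intro cos_monotone_0_pi_le) auto
  qed
  show "(-1) ^ j * cos (real n * t) \<le> - cos p" if "t0 + (pi - p) / n \<le> t" "t \<le> t0 + pi / n"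
  proof -
    have "pi - p \<le> phase t" "phase t \<le> pi"
      using that by (simp_all add: phase_le_iff)
    then have "cos p \<le> cos (pi - phase t)"
      using assms(2,3) by (intro cos_monotone_0_pi_le) auto
    then show ?thesis
      unfolding cos_nt by simp
  qed
  show "sin p \<le> \<bar>sin (real n * t)\<bar>" if "t0 + p / n \<le> t" "t \<le> t0 + (pi - p) / n"
  proof -
    have "p \<le> phase t" "phase t \<le> pi - p"
      using that by (simp_all add: phase_le_iff)
    then have "sin p \<le> sin (phase t)"
      using assms(2,3) by (intro sin_le_sin_inner) auto
    then show ?thesis
      unfolding sin_nt by simp
  qed
qed

lemma sign_of_neg_one_power_mult:
  assumes "\<And>t. t \<in> S \<Longrightarrow> c \<le> (-1) ^ j * f t"
  shows "(\<forall>t\<in>S. c \<le> f t) \<or> (\<forall>t\<in>S. f t \<le> - (c::real))"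
  using assms by (cases "even j") force+

definition window_roots :: "nat \<Rightarrow> nat \<Rightarrow> nat" where
  "window_roots n j = roots_between (Q_poly n) (cos (real (Suc j) * pi / n)) (cos (real j * pi / n))"

text \<open>The window \<open>[j\<pi>/n, (j+1)\<pi>/n]\<close> of the angle \<open>t\<close> is cut at distance \<open>arccos c0 / n\<close> from its
  ends: near the ends \<open>\<bar>cos (n t)\<bar> \<ge> c0\<close>, in the middle \<open>\<bar>sin (n t)\<bar> \<ge> sin (arccos c0)\<close>.\<close>

lemma window_roots_bounds:
  assumes "4 < n" "j < n" "7/10 \<le> c0" "c0 < 1"
    and "44 < real n * sin (arccos c0)"
    and "2 * (real n / sin (alpha / 2)) + 216 < 7/5 * (real n)\<^sup>2"
    and "pi / real n \<le> alpha / 2"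
    and "alpha \<le> real (Suc j) * pi / n" "real j * pi / n \<le> pi - alpha"
  shows "window_roots n j \<le> 5"
    and "(\<And>t. real j * pi / n \<le> t \<Longrightarrow> t \<le> real (Suc j) * pi / n \<Longrightarrow> poly F_poly (cos t) < 2 * c0)
         \<Longrightarrow> window_roots n j \<le> 1"
proof -
  define p where "p = arccos c0"
  define t0 where "t0 = real j * pi / n"
  define t3 where "t3 = real (Suc j) * pi / n"
  define t1 where "t1 = t0 + p / n"
  define t2 where "t2 = t0 + (pi - p) / n"
  have "0 < real n"
    using assms(1) by simp
  have p: "0 < p" "p \<le> pi / 2" "cos p = c0"
    using assms(3,4) arccos_lt_bounded[of c0] arccos_le_arccos[of 0 c0]
    by (auto simp: p_def cos_arccos)
  have t3_eq: "t3 = t0 + pi / n"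
    unfolding t3_def t0_def by (simp add: add_divide_distrib[symmetric] algebra_simps)
  have "2 * (p / n) \<le> pi / n"
    using p \<open>0 < real n\<close> by (simp add: divide_right_mono)
  moreover have "real (Suc j) * pi \<le> real n * pi"
    using assms(2) by (intro mult_right_mono) auto
  ultimately have ord: "0 \<le> t0" "t0 \<le> t1" "t1 \<le> t2" "t2 \<le> t3" "t3 \<le> pi"
    using p \<open>0 < real n\<close> by (auto simp: t0_def t1_def t2_def t3_eq field_simps)
  have "0 < n"
    using assms(1) by simp
  note phase = window_phase_bounds[OF \<open>0 < n\<close> less_imp_le[OF p(1)] p(2), where j=j,
      folded t0_def, folded t1_def t2_def t3_eq, unfolded p(3)]
  have end1: "(\<forall>t\<in>{t0..t1}. c0 \<le> cos (real n * t)) \<or> (\<forall>t\<in>{t0..t1}. cos (real n * t) \<le> - c0)"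
    using phase(1) by (intro sign_of_neg_one_power_mult[of _ _ j]) auto
  have "c0 \<le> (-1) ^ j * - cos (real n * t)" if "t \<in> {t2..t3}" for t
    using phase(2)[of t] that by auto
  then have "(\<forall>t\<in>{t2..t3}. c0 \<le> - cos (real n * t)) \<or> (\<forall>t\<in>{t2..t3}. - cos (real n * t) \<le> - c0)"
    by (rule sign_of_neg_one_power_mult)
  then have end2: "(\<forall>t\<in>{t2..t3}. c0 \<le> cos (real n * t)) \<or> (\<forall>t\<in>{t2..t3}. cos (real n * t) \<le> - c0)"
    by auto
  have middle: "sin p \<le> \<bar>sin (real n * t)\<bar>" if "t1 \<le> t" "t \<le> t2" for t
    using phase(3) that .
  have "sin (alpha / 2) \<le> sin t" if "t0 \<le> t" "t \<le> t3" for t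
  proof -
    have "alpha / 2 \<le> t" "t \<le> pi - alpha / 2"
      using that assms(7-9) unfolding t0_def[symmetric] t3_def[symmetric] t3_eq by linarith+
    then show ?thesis
      using alpha_bounds by (intro sin_le_sin_inner) auto
  qed
  moreover have "0 < sin (alpha / 2)"
    using alpha_bounds by (intro sin_gt_zero) auto
  ultimately have end_bounds:
    "roots_between (Q_poly n) (cos t1) (cos t0) \<le> 2"
    "roots_between (Q_poly n) (cos t3) (cos t2) \<le> 2"
    "(\<And>t. t0 \<le> t \<Longrightarrow> t \<le> t3 \<Longrightarrow> poly F_poly (cos t) < 2 * c0) \<Longrightarrow>
       roots_between (Q_poly n) (cos t1) (cos t0) = 0 \<and> roots_between (Q_poly n) (cos t3) (cos t2) = 0"
    using roots_Q_poly_end_segment[OF assms(1) _ _ _ assms(3) _ _ assms(6)] end1 end2 ord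
    by (auto simp del: atLeastAtMost_iff)
  have mid_bound: "roots_between (Q_poly n) (cos t2) (cos t1) \<le> 1"
    using ord middle assms(5) unfolding p_def
    by (intro roots_Q_poly_sin_bounded_below[OF assms(1)]) auto
  have cos_le: "cos b \<le> cos a" if "a \<le> b" "0 \<le> a" "b \<le> pi" for a b
    using that by (intro cos_monotone_0_pi_le) auto
  have "window_roots n j \<le> roots_between (Q_poly n) (cos t3) (cos t2) + roots_between (Q_poly n) (cos t2) (cos t0)"
    unfolding window_roots_def t3_def[symmetric] t0_def[symmetric]
    using ord by (intro roots_between_subadditive Q_poly_nonzero assms(1) cos_le) auto
  also have "roots_between (Q_poly n) (cos t2) (cos t0)
             \<le> roots_between (Q_poly n) (cos t2) (cos t1) + roots_between (Q_poly n) (cos t1) (cos t0)"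
    using ord by (intro roots_between_subadditive Q_poly_nonzero assms(1) cos_le) auto
  finally have split: "window_roots n j \<le> roots_between (Q_poly n) (cos t3) (cos t2)
      + roots_between (Q_poly n) (cos t2) (cos t1) + roots_between (Q_poly n) (cos t1) (cos t0)"
    by simp
  then show "window_roots n j \<le> 5"
    using end_bounds(1,2) mid_bound by linarith
  show "window_roots n j \<le> 1"
    if "\<And>t. real j * pi / n \<le> t \<Longrightarrow> t \<le> real (Suc j) * pi / n \<Longrightarrow> poly F_poly (cos t) < 2 * c0"
    using split end_bounds(3) mid_bound that unfolding t0_def t3_def by fastforce
qed

section \<open>Counting the roots of \<open>Q\<^sub>n\<close> in \<open>[-1, 1]\<close>\<close>

lemma F_poly_cos_lt_2:
  assumes "alpha < t" "t < pi - alpha"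
  shows "poly F_poly (cos t) < 2"
proof -
  have "cos t < cos alpha"
    using assms alpha_bounds by (intro cos_monotone_0_pi) auto
  moreover have "cos (pi - alpha) < cos t"
    using assms alpha_bounds by (intro cos_monotone_0_pi) auto
  ultimately have "\<bar>cos t\<bar>\<^sup>2 < (cos alpha)\<^sup>2"
    by (intro power_strict_mono) auto
  then have "(cos t)\<^sup>2 < (cos alpha)\<^sup>2"
    by simp
  then show ?thesis
    using F_poly_le[of "cos t"] by argo
qed

lemma Q_poly_root_in_window:
  assumes "0 < n" "alpha < real j * pi / n" "real (Suc j) * pi / n < pi - alpha"
  shows "\<exists>x. cos (real (Suc j) * pi / n) < x \<and> x < cos (real j * pi / n) \<and> poly (Q_poly n) x = 0"
proof -
  define t1 t2 where "t1 = real j * pi / n" and "t2 = real (Suc j) * pi / n"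
  have "t1 < t2"
    unfolding t1_def t2_def using assms(1) by (simp add: divide_strict_right_mono)
  then have F: "poly F_poly (cos t1) < 2" "poly F_poly (cos t2) < 2"
    using assms(2,3) by (auto simp: t1_def t2_def intro!: F_poly_cos_lt_2)
  have Q: "poly (Q_poly n) (cos t1) = 2 * (-1) ^ j + poly F_poly (cos t1)"
    "poly (Q_poly n) (cos t2) = 2 * (-1) ^ Suc j + poly F_poly (cos t2)"
    unfolding poly_Q_poly_cos t1_def t2_def using assms(1) by (simp_all add: cos_npi del: of_nat_Suc)
  have "poly (Q_poly n) (cos t2) * poly (Q_poly n) (cos t1) < 0"
    using F F_poly_ge[of "cos t1"] F_poly_ge[of "cos t2"] unfolding Q
    by (cases "even j") (auto intro: mult_neg_pos mult_pos_neg)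
  moreover have "cos t2 < cos t1"
    using \<open>t1 < t2\<close> assms(3) alpha_bounds by (intro cos_monotone_0_pi) (auto simp: t1_def t2_def)
  ultimately show ?thesis
    unfolding t1_def t2_def using poly_IVT by blast
qed

lemma roots_Q_poly_lower_bound:
  assumes "4 < n"
  shows "real n * (1 - 2 * alpha / pi) - 2 \<le> real (roots_between (Q_poly n) (-1) 1)"
proof -
  define J where "J = {j::nat. real n * alpha / pi < real j \<and> real j < real n * (pi - alpha) / pi - 1}"
  define l where "l j = cos (real (Suc j) * pi / n)" for j
  define r where "r j = cos (real j * pi / n)" for j
  have "0 < real n"
    using assms by simp
  have J_bound: "real (Suc j) \<le> real n" if "j \<in> J" for j
  proof -
    have "real j < real n * (pi - alpha) / pi - 1"
      using that by (simp add: J_def)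
    also have "\<dots> \<le> real n - 1"
      using alpha_bounds \<open>0 < real n\<close> by (simp add: field_simps)
    finally show ?thesis
      by simp
  qed
  have angle_le_pi: "real (Suc j) * pi / n \<le> pi" if "j \<in> J" for j
  proof -
    have "real (Suc j) * pi \<le> real n * pi"
      using J_bound[OF that] by (intro mult_right_mono) auto
    then show ?thesis
      using \<open>0 < real n\<close> by (simp add: pos_divide_le_eq mult.commute)
  qed
  have angles: "alpha < real j * pi / n" "real (Suc j) * pi / n < pi - alpha" if "j \<in> J" for j
    using that \<open>0 < real n\<close> by (simp_all add: J_def field_simps)
  have "card J \<le> roots_between (Q_poly n) (-1) 1"
  proof (rule card_le_roots_between[OF Q_poly_nonzero[OF assms]])
    show "finite J"
    proof (rule finite_subset)
      show "J \<subseteq> {..<n}"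
        using J_bound by (force simp del: of_nat_Suc simp: Suc_le_eq)
    qed simp
  next
    fix j
    assume "j \<in> J"
    show "\<exists>x. l j < x \<and> x < r j \<and> poly (Q_poly n) x = 0"
      using Q_poly_root_in_window[OF _ angles[OF \<open>j \<in> J\<close>]] assms unfolding l_def r_def by simp
    show "-1 \<le> l j \<and> r j \<le> 1"
      by (simp add: l_def r_def)
  next
    fix i j
    assume "i \<in> J" "j \<in> J" "i \<noteq> j"
    have "r k \<le> l i" if "i < k" "k \<in> J" for i k
    proof -
      have "real (Suc i) * pi / n \<le> real k * pi / n" "real k * pi / n \<le> real (Suc k) * pi / n"
        using that \<open>0 < real n\<close> by (auto intro!: divide_right_mono mult_right_mono)
      then show ?thesis
        unfolding l_def r_def using angle_le_pi[OF \<open>k \<in> J\<close>] \<open>0 < real n\<close>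
        by (intro cos_monotone_0_pi_le) auto
    qed
    then show "r i \<le> l j \<or> r j \<le> l i"
      using \<open>i \<in> J\<close> \<open>j \<in> J\<close> \<open>i \<noteq> j\<close> by (meson linorder_neqE_nat)
  qed
  then have "real (card J) \<le> real (roots_between (Q_poly n) (-1) 1)"
    by simp
  moreover have "real n * (pi - alpha) / pi - 1 - real n * alpha / pi - 1 \<le> real (card J)"
    unfolding J_def using alpha_bounds by (intro card_nat_between_ge) simp
  moreover have "real n * (pi - alpha) / pi - 1 - real n * alpha / pi - 1 = real n * (1 - 2 * alpha / pi) - 2"
    by (simp add: field_simps)
  ultimately show ?thesis
    by linarith
qed

lemma card_windows_meeting:
  assumes "0 < n" "a \<le> b"
  shows "real (card {j. j < N \<and> a \<le> real (Suc j) * pi / n \<and> real j * pi / n \<le> b})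
         \<le> real n * (b - a) / pi + 2"
proof -
  let ?S = "{j::nat. real n * a / pi - 1 \<le> real j \<and> real j \<le> real n * b / pi}"
  have "{j. j < N \<and> a \<le> real (Suc j) * pi / n \<and> real j * pi / n \<le> b} \<subseteq> ?S"
    using assms(1) by (auto simp: field_simps)
  moreover have "finite ?S"
    by (rule finite_subset[of _ "{..nat \<lceil>real n * b / pi\<rceil>}"]) (auto, linarith)
  ultimately have "card {j. j < N \<and> a \<le> real (Suc j) * pi / n \<and> real j * pi / n \<le> b} \<le> card ?S"
    by (rule card_mono[rotated])
  also have "real (card ?S) \<le> real n * b / pi - (real n * a / pi - 1) + 1"
  proof (rule card_nat_between_le)
    have "real n * a / pi \<le> real n * b / pi"
      using assms by (intro divide_right_mono mult_left_mono) auto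
    then show "real n * a / pi - 1 \<le> real n * b / pi"
      by linarith
  qed
  finally show ?thesis
    by (simp add: field_simps)
qed

lemma cos_window_ends_antimono:
  assumes "0 < n"
  shows "antimono_on {..n} (\<lambda>j. cos (real j * pi / n))"
proof (rule monotone_onI)
  fix i j
  assume "i \<in> {..n}" "j \<in> {..n}" "i \<le> j"
  have "real i * pi / n \<le> real j * pi / n"
    using \<open>i \<le> j\<close> by (intro divide_right_mono mult_right_mono) auto
  moreover have "real j * pi \<le> real n * pi"
    using \<open>j \<in> {..n}\<close> by (intro mult_right_mono) auto
  then have "real j * pi / n \<le> pi"
    using assms by (simp add: pos_divide_le_eq mult.commute)
  ultimately show "cos (real j * pi / n) \<le> cos (real i * pi / n)"
    by (intro cos_monotone_0_pi_le) auto
qed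

lemma roots_Q_poly_le_sum_window_roots:
  assumes "4 < n"
  shows "roots_between (Q_poly n) (-1) 1 \<le> (\<Sum>j<n. window_roots n j)"
proof -
  obtain m where m: "n = Suc m"
    using assms by (cases n) auto
  have "roots_between (Q_poly n) (cos (real (Suc m) * pi / n)) (cos (real 0 * pi / n))
        \<le> (\<Sum>j\<le>m. roots_between (Q_poly n) (cos (real (Suc j) * pi / n)) (cos (real j * pi / n)))"
    using cos_window_ends_antimono[of n] assms unfolding m
    by (intro roots_between_le_sum[OF Q_poly_nonzero]) auto
  then show ?thesis
    by (simp add: m window_roots_def lessThan_Suc_atMost del: of_nat_Suc)
qed

lemma sum_lessThan_if_const:
  fixes n :: nat
  shows "(\<Sum>j<n. if P j then c else 0) = c * card {j. j < n \<and> P j}"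
proof -
  have "(\<Sum>j<n. if P j then c else 0) = (\<Sum>j\<in>{j \<in> {..<n}. P j}. c)"
    by (rule sum.inter_filter[symmetric]) simp
  also have "{j \<in> {..<n}. P j} = {j. j < n \<and> P j}"
    by auto
  finally show ?thesis
    by (simp add: mult.commute)
qed

lemma sum_window_roots_le:
  assumes "4 < n" "alpha < beta" "beta < pi / 2" "7/10 \<le> c0" "c0 < 1"
    and "44 < real n * sin (arccos c0)"
    and "2 * (real n / sin (alpha / 2)) + 216 < 7/5 * (real n)\<^sup>2"
    and "pi / real n \<le> alpha / 2"
    and F_below: "\<And>t. beta \<le> t \<Longrightarrow> t \<le> pi - beta \<Longrightarrow> poly F_poly (cos t) < 2 * c0"
  shows "real (\<Sum>j<n. window_roots n j) \<le> real n * (1 - 2 * alpha / pi) + 8 * real n * (beta - alpha) / pi + 18"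
proof -
  define meets where "meets a b j \<longleftrightarrow> a \<le> real (Suc j) * pi / n \<and> real j * pi / n \<le> b" for a b j
  define inside where "inside j \<longleftrightarrow> beta \<le> real j * pi / n \<and> real (Suc j) * pi / n \<le> pi - beta" for j
  have "0 < real n"
    using assms(1) by simp
  have ends: "0 \<le> real j * pi / n" "real j * pi / n \<le> real (Suc j) * pi / n" "real (Suc j) * pi / n \<le> pi"
    if "j < n" for j
  proof -
    show "0 \<le> real j * pi / n" "real j * pi / n \<le> real (Suc j) * pi / n"
      by (auto intro!: divide_right_mono mult_right_mono)
    have "real (Suc j) * pi \<le> real n * pi"
      using that by (intro mult_right_mono) auto
    then show "real (Suc j) * pi / n \<le> pi"
      using \<open>0 < real n\<close> by (simp add: pos_divide_le_eq mult.commute)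
  qed
  have window: "window_roots n j \<le> (if meets alpha (pi - alpha) j then 1 else 0)
      + (if meets alpha (pi - alpha) j \<and> \<not> inside j then 4 else 0)" if "j < n" for j
  proof (cases "meets alpha (pi - alpha) j")
    case False
    then have "window_roots n j = 0"
      unfolding window_roots_def meets_def
      by (intro roots_Q_poly_beyond_alpha ends[OF that]) auto
    then show ?thesis
      by simp
  next
    case meets: True
    note bounds = window_roots_bounds[OF assms(1) that assms(4-8)] meets[unfolded meets_def]
    show ?thesis
    proof (cases "inside j")
      case True
      then have "window_roots n j \<le> 1"
        using bounds F_below unfolding inside_def by force
      then show ?thesis
        using meets True by simp
    next
      case False
      then show ?thesis
        using bounds \<open>meets alpha (pi - alpha) j\<close> by simp
    qed
  qed
  have "(\<Sum>j<n. window_roots n j)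
        \<le> (\<Sum>j<n. (if meets alpha (pi - alpha) j then 1 else 0)
                  + (if meets alpha (pi - alpha) j \<and> \<not> inside j then 4 else 0))"
    using window by (intro sum_mono) auto
  also have "\<dots> = card {j. j < n \<and> meets alpha (pi - alpha) j}
                   + 4 * card {j. j < n \<and> meets alpha (pi - alpha) j \<and> \<not> inside j}"
    by (simp add: sum.distrib sum_lessThan_if_const)
  finally have sum_le: "real (\<Sum>j<n. window_roots n j) \<le> real (card {j. j < n \<and> meets alpha (pi - alpha) j})
                   + 4 * real (card {j. j < n \<and> meets alpha (pi - alpha) j \<and> \<not> inside j})"
    using of_nat_mono by fastforce
  have "real (card {j. j < n \<and> meets alpha (pi - alpha) j}) \<le> real n * (pi - alpha - alpha) / pi + 2"
    unfolding meets_def using \<open>0 < real n\<close> alpha_bounds by (intro card_windows_meeting) auto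
  moreover have "card {j. j < n \<and> meets alpha (pi - alpha) j \<and> \<not> inside j}
       \<le> card ({j. j < n \<and> meets alpha beta j} \<union> {j. j < n \<and> meets (pi - beta) (pi - alpha) j})"
    by (intro card_mono) (auto simp: meets_def inside_def)
  then have "card {j. j < n \<and> meets alpha (pi - alpha) j \<and> \<not> inside j}
       \<le> card {j. j < n \<and> meets alpha beta j} + card {j. j < n \<and> meets (pi - beta) (pi - alpha) j}"
    using card_Un_le le_trans by blast
  then have "real (card {j. j < n \<and> meets alpha (pi - alpha) j \<and> \<not> inside j})
       \<le> real (card {j. j < n \<and> meets alpha beta j}) + real (card {j. j < n \<and> meets (pi - beta) (pi - alpha) j})"
    using of_nat_mono by fastforce
  moreover have "real (card {j. j < n \<and> meets alpha beta j}) \<le> real n * (beta - alpha) / pi + 2"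
    unfolding meets_def using \<open>0 < real n\<close> assms(2) by (intro card_windows_meeting) auto
  moreover have "real (card {j. j < n \<and> meets (pi - beta) (pi - alpha) j}) \<le> real n * (beta - alpha) / pi + 2"
    unfolding meets_def using \<open>0 < real n\<close> assms(2) card_windows_meeting[of n "pi - beta" "pi - alpha" n]
    by simp
  moreover have "real n * (pi - alpha - alpha) / pi = real n * (1 - 2 * alpha / pi)"
    by (simp add: field_simps)
  moreover have "8 * real n * (beta - alpha) / pi = 8 * (real n * (beta - alpha) / pi)"
    by simp
  ultimately show ?thesis
    using sum_le by argo
qed

lemma eventually_real_gt: "\<forall>\<^sub>F n in sequentially. K < real n"
proof -
  obtain N :: nat where "K < real N"
    using reals_Archimedean2 by blast
  then show ?thesis
    by (intro eventually_sequentiallyI[of N]) auto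
qed

lemma eventually_large_window_conditions:
  assumes "0 < s0" "0 < sg"
  shows "\<forall>\<^sub>F n in sequentially. 4 < n \<and> 44 < real n * s0
           \<and> 2 * (real n / sg) + 216 < 7/5 * (real n)\<^sup>2 \<and> pi / real n \<le> alpha / 2"
proof -
  have "\<forall>\<^sub>F n in sequentially. 4 + 44 / s0 + 2 / sg + 216 + 2 * pi / alpha < real n"
    by (rule eventually_real_gt)
  then show ?thesis
  proof eventually_elim
    case (elim n)
    have pos: "0 \<le> 44 / s0" "0 \<le> 2 / sg" "0 \<le> 2 * pi / alpha"
      using assms alpha_bounds by auto
    then have "4 < n"
      using elim by linarith
    have "44 / s0 < real n" "2 * pi / alpha < real n"
      using elim pos by linarith+
    then have "44 < real n * s0" "2 * pi < real n * alpha"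
      using assms alpha_bounds by (simp_all add: divide_less_eq mult.commute)
    then have "pi / real n \<le> alpha / 2"
      using \<open>4 < n\<close> by (simp add: divide_le_eq mult.commute)
    have "2 / sg + 216 \<le> real n"
      using elim pos by linarith
    then have "real n * (2 / sg + 216) \<le> real n * real n"
      by (intro mult_left_mono) auto
    moreover have "2 * (real n / sg) + 216 \<le> real n * (2 / sg + 216)"
      using \<open>4 < n\<close> by (simp add: algebra_simps)
    moreover have "real n * real n < 7/5 * (real n)\<^sup>2"
      using \<open>4 < n\<close> by (simp add: power2_eq_square)
    ultimately have "2 * (real n / sg) + 216 < 7/5 * (real n)\<^sup>2"
      by linarith
    then show ?case
      using \<open>4 < n\<close> \<open>44 < real n * s0\<close> \<open>pi / real n \<le> alpha / 2\<close> by blast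
  qed
qed

lemma roots_Q_poly_upper_bound:
  assumes "alpha < beta" "beta < pi / 2"
  shows "\<forall>\<^sub>F n in sequentially. real (roots_between (Q_poly n) (-1) 1)
           \<le> real n * (1 - 2 * alpha / pi) + 8 * real n * (beta - alpha) / pi + 18"
proof -
  define d where "d = (cos alpha)\<^sup>2 - (cos beta)\<^sup>2"
  define c0 where "c0 = 1 - 3/10 * d"
  define s0 where "s0 = sin (arccos c0)"
  define sg where "sg = sin (alpha / 2)"
  have "0 < cos beta" "cos beta < cos alpha"
    using assms alpha_bounds by (auto intro!: cos_gt_zero_pi cos_monotone_0_pi)
  then have "(cos beta)\<^sup>2 < (cos alpha)\<^sup>2"
    by (intro power_strict_mono) auto
  moreover have "(cos alpha)\<^sup>2 \<le> 1"
    by (simp add: abs_square_le_1)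
  ultimately have "0 < d" "d \<le> 1"
    unfolding d_def using zero_le_power2[of "cos beta"] by linarith+
  then have c0: "7/10 \<le> c0" "c0 < 1"
    unfolding c0_def by auto
  have F_below: "poly F_poly (cos t) < 2 * c0" if "beta \<le> t" "t \<le> pi - beta" for t
  proof -
    have "cos t \<le> cos beta"
      using that assms alpha_bounds by (intro cos_monotone_0_pi_le) auto
    moreover have "cos (pi - beta) \<le> cos t"
      using that assms alpha_bounds by (intro cos_monotone_0_pi_le) auto
    ultimately have "\<bar>cos t\<bar>\<^sup>2 \<le> (cos beta)\<^sup>2"
      by (intro power_mono) auto
    then have "(cos t)\<^sup>2 \<le> (cos alpha)\<^sup>2 - d"
      unfolding d_def by simp
    then show ?thesis
      using F_poly_le[of "cos t"] \<open>0 < d\<close> unfolding c0_def by argo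
  qed
  have "0 < s0"
    unfolding s0_def using c0 arccos_lt_bounded[of c0] by (intro sin_gt_zero) auto
  have "0 < sg"
    unfolding sg_def using alpha_bounds by (intro sin_gt_zero) auto
  from eventually_large_window_conditions[OF \<open>0 < s0\<close> \<open>0 < sg\<close>]
  show ?thesis
  proof eventually_elim
    case (elim n)
    then have "4 < n"
      by blast
    have "real (\<Sum>j<n. window_roots n j)
          \<le> real n * (1 - 2 * alpha / pi) + 8 * real n * (beta - alpha) / pi + 18"
      using elim sum_window_roots_le[OF \<open>4 < n\<close> assms c0 _ _ _ F_below] unfolding s0_def sg_def by blast
    moreover have "real (roots_between (Q_poly n) (-1) 1) \<le> real (\<Sum>j<n. window_roots n j)"
      using roots_Q_poly_le_sum_window_roots[OF \<open>4 < n\<close>] by (rule of_nat_mono)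
    ultimately show ?case
      by linarith
  qed
qed

lemma roots_Q_poly_density:
  "(\<lambda>n. real (roots_between (Q_poly n) (-1) 1) / real n) \<longlonglongrightarrow> 1 - 2 * alpha / pi"
  unfolding tendsto_iff
proof (intro allI impI)
  fix e :: real
  assume "0 < e"
  define beta where "beta = alpha + min (e * pi / 32) ((pi / 2 - alpha) / 2)"
  have "0 < min (e * pi / 32) ((pi / 2 - alpha) / 2)"
    using \<open>0 < e\<close> alpha_bounds by simp
  then have "alpha < beta" "beta < pi / 2" "8 * (beta - alpha) \<le> e * pi / 4"
    unfolding beta_def using min.cobounded1[of "e * pi / 32"] min.cobounded2[of _ "(pi / 2 - alpha) / 2"]
      alpha_bounds by argo+
  then have "8 * (beta - alpha) / pi \<le> e / 4"
    by (simp add: pos_divide_le_eq)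
  have "\<forall>\<^sub>F n in sequentially. 4 + 36 / e < real n"
    by (rule eventually_real_gt)
  with roots_Q_poly_upper_bound[OF \<open>alpha < beta\<close> \<open>beta < pi / 2\<close>]
  show "\<forall>\<^sub>F n in sequentially. dist (real (roots_between (Q_poly n) (-1) 1) / real n) (1 - 2 * alpha / pi) < e"
  proof eventually_elim
    case (elim n)
    let ?R = "real (roots_between (Q_poly n) (-1) 1)"
    have "0 < 36 / e"
      using \<open>0 < e\<close> by simp
    then have "4 < real n" "36 / e < real n"
      using elim(2) by linarith+
    then have "4 < n" "36 < e * real n"
      using \<open>0 < e\<close> by (simp_all add: divide_less_eq mult.commute)
    then have "0 < real n" "18 / real n < e / 2" "2 / real n < e"
      by (auto simp: field_simps)
    have upper: "?R / real n \<le> 1 - 2 * alpha / pi + 8 * (beta - alpha) / pi + 18 / real n"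
      using elim(1) \<open>0 < real n\<close> by (simp add: field_simps)
    have "real n * (1 - 2 * alpha / pi - 2 / real n) = real n * (1 - 2 * alpha / pi) - 2"
      using \<open>0 < real n\<close> by (simp add: field_simps)
    then have lower: "1 - 2 * alpha / pi - 2 / real n \<le> ?R / real n"
      using roots_Q_poly_lower_bound[OF \<open>4 < n\<close>] \<open>0 < real n\<close> by (simp add: pos_le_divide_eq mult.commute)
    show ?case
      using upper lower \<open>8 * (beta - alpha) / pi \<le> e / 4\<close> \<open>18 / real n < e / 2\<close> \<open>2 / real n < e\<close>
      unfolding dist_real_def by argo
  qed
qed

theorem mainTheorem7:
  shows "(\<lambda>n. C_ratio (P2n n)) \<longlonglongrightarrow>
           (2 / pi) * arccos (sqrt (3/8 + sqrt 13 / 8))"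
proof -
  have "(\<lambda>n. 1 - real (roots_between (Q_poly n) (-1) 1) / real n) \<longlonglongrightarrow> 1 - (1 - 2 * alpha / pi)"
    by (intro tendsto_diff tendsto_const roots_Q_poly_density)
  moreover have "\<forall>\<^sub>F n in sequentially. 1 - real (roots_between (Q_poly n) (-1) 1) / real n = C_ratio (P2n n)"
    using eventually_gt_at_top[of 4] by eventually_elim (simp add: C_ratio_P2n)
  ultimately show ?thesis
    unfolding alpha_def by (simp add: Lim_transform_eventually)
qed

end
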